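(* Consider the uncertain model $0 = \hat f(\hat x_{k+1}, \hat x_k, u_k, \hat w_k, \hat\theta)$, $\hat y_k = \hat g(\hat x_k, u_k, \hat w_k, \hat\theta)$, $\hat w_k \in \hat{\mathcal W}(\hat\gamma)$, and a data set $(U,Y)$. Suppose that: (1) both the optimistic and pessimistic uncertainty model unfalsification problems are feasible and have unique solutions; (2) the set $\hat{\mathcal W}(\gamma)$ is convex for all $\gamma$; (3) the minimum-volume enclosing set $\hat{\mathcal W}^*_{\mathcal X}$ of a set $\mathcal X$ (the set $\hat{\mathcal W}(\gamma)$ of minimal $r(\gamma)$ among those containing $\mathcal X$) satisfies monotonicity, i.e. $\mathcal A\subseteq\mathcal B \implies \hat{\mathcal W}^*_{\mathcal A}\subseteq\hat{\mathcal W}^*_{\mathcal B}$; (4) the function $r$ satisfies monotonicity, i.e. $\hat{\mathcal W}(\gamma_1)\subseteq\hat{\mathcal W}(\gamma_2)\implies r(\gamma_1)\le r(\gamma_2)$. Then weak duality holds between the optimistic and the pessimistic problems, i.e. $r(\gamma^*_{\mathrm{opt}})\le r(\gamma^*_{\mathrm{pess}})$, where $\gamma^*_{\mathrm{opt}}$ and $\gamma^*_{\mathrm{pess}}$ are the optimal uncertainty parameters of the optimistic and pessimistic problems respectively.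
   Context: Model: $\hat f$ is a discrete-time model of the state dynamics, $\hat g$ models the measurements, $\hat\theta$ denotes model parameters, $u_k$ the inputs, $\hat w_k$ the model uncertainties, constrained to lie in a time-invariant set $\hat{\mathcal W}(\gamma)$ parametrized by $\gamma$; $r(\gamma)$ is an uncertainty metric ("volume") function; $\hat\Theta(U,Y)$, $\hat\Gamma(U,Y)$ are admissible parameter sets. Data: $(U,Y)=((u_0,\dots,u_{N-1}),(y_0,\dots,y_{N-1}))$. For parameters $\theta$, $\Omega_\theta(\hat f,\hat g,U,Y) = \{W=(w_0,\dots,w_{N-1}) : \exists\,(x_0,\dots,x_{N-1})\subseteq\mathcal X_{\mathrm{state}} \text{ with } 0=\hat f(x_{k+1},x_k,u_k,w_k,\theta),\ y_k=\hat g(x_k,u_k,w_k,\theta),\ k=0,\dots,N-1\}$ is the set of permissible uncertainty trajectories. Optimistic problem: $\min_{W,\theta,\gamma} r(\gamma)$ s.t. $W\in\Omega_\theta(\hat f,\hat g,U,Y)$, $w_i\in\hat{\mathcal W}(\gamma)$ for all $i$, $\theta\in\hat\Theta(U,Y)$, $\gamma\in\hat\Gamma(U,Y)$. Pessimistic problem: $\min_{\gamma\in\hat\Gamma(U,Y),\theta\in\hat\Theta(U,Y)} r(\gamma)$ s.t. $W\subseteq\hat{\mathcal W}(\gamma)$ (i.e. all $w_i\in\hat{\mathcal W}(\gamma)$) for all $W\in\Omega_\theta(\hat f,\hat g,U,Y)$.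
   Formalization: The set $\hat\Theta(U,Y)$ contains only parameters $\theta$ with nonempty $\Omega_\theta(\hat f,\hat g,U,Y)$, so every admissible $\theta$ admits at least one permissible uncertainty trajectory. The statement above fails without it. *)

theory Defs
  imports "HOL-Analysis.Analysis"
begin

definition Omega ::
  "('x \<Rightarrow> 'x \<Rightarrow> 'u \<Rightarrow> 'w \<Rightarrow> 'th \<Rightarrow> 'z::zero) \<Rightarrow> ('x \<Rightarrow> 'u \<Rightarrow> 'w \<Rightarrow> 'th \<Rightarrow> 'y)
   \<Rightarrow> 'x set \<Rightarrow> 'u list \<Rightarrow> 'y list \<Rightarrow> 'th \<Rightarrow> 'w list set" where
  "Omega f g Xstate U Y \<theta> =
     {W. length W = length U \<and>
         (\<exists>x :: nat \<Rightarrow> 'x.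
            (\<forall>k < length U. x k \<in> Xstate) \<and>
            (\<forall>k < length U. f (x (Suc k)) (x k) (U ! k) (W ! k) \<theta> = 0 \<and>
                            Y ! k = g (x k) (U ! k) (W ! k) \<theta>))}"

definition opt_feasible ::
  "('x \<Rightarrow> 'x \<Rightarrow> 'u \<Rightarrow> 'w \<Rightarrow> 'th \<Rightarrow> 'z::zero) \<Rightarrow> ('x \<Rightarrow> 'u \<Rightarrow> 'w \<Rightarrow> 'th \<Rightarrow> 'y)
   \<Rightarrow> 'x set \<Rightarrow> ('g \<Rightarrow> 'w set) \<Rightarrow> ('u list \<Rightarrow> 'y list \<Rightarrow> 'th set) \<Rightarrow> ('u list \<Rightarrow> 'y list \<Rightarrow> 'g set)
   \<Rightarrow> 'u list \<Rightarrow> 'y list \<Rightarrow> 'w list \<Rightarrow> 'th \<Rightarrow> 'g \<Rightarrow> bool" where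
  "opt_feasible f g Xstate Wset Thet Gam U Y W \<theta> \<gamma> \<longleftrightarrow>
     W \<in> Omega f g Xstate U Y \<theta> \<and> (\<forall>w \<in> set W. w \<in> Wset \<gamma>) \<and>
     \<theta> \<in> Thet U Y \<and> \<gamma> \<in> Gam U Y"

definition pess_feasible ::
  "('x \<Rightarrow> 'x \<Rightarrow> 'u \<Rightarrow> 'w \<Rightarrow> 'th \<Rightarrow> 'z::zero) \<Rightarrow> ('x \<Rightarrow> 'u \<Rightarrow> 'w \<Rightarrow> 'th \<Rightarrow> 'y)
   \<Rightarrow> 'x set \<Rightarrow> ('g \<Rightarrow> 'w set) \<Rightarrow> ('u list \<Rightarrow> 'y list \<Rightarrow> 'th set) \<Rightarrow> ('u list \<Rightarrow> 'y list \<Rightarrow> 'g set)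
   \<Rightarrow> 'u list \<Rightarrow> 'y list \<Rightarrow> 'th \<Rightarrow> 'g \<Rightarrow> bool" where
  "pess_feasible f g Xstate Wset Thet Gam U Y \<theta> \<gamma> \<longleftrightarrow>
     \<theta> \<in> Thet U Y \<and> \<gamma> \<in> Gam U Y \<and>
     (\<forall>W \<in> Omega f g Xstate U Y \<theta>. \<forall>w \<in> set W. w \<in> Wset \<gamma>)"

definition unique_argmin :: "('a \<Rightarrow> bool) \<Rightarrow> ('a \<Rightarrow> real) \<Rightarrow> 'a \<Rightarrow> bool" where
  "unique_argmin P c a \<longleftrightarrow> P a \<and> (\<forall>b. P b \<longrightarrow> c a \<le> c b) \<and> (\<forall>b. P b \<and> c b = c a \<longrightarrow> b = a)"

definition min_enclosing :: "('g \<Rightarrow> 'w set) \<Rightarrow> ('g \<Rightarrow> real) \<Rightarrow> 'w set \<Rightarrow> 'w set \<Rightarrow> bool" where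
  "min_enclosing Wset r A S \<longleftrightarrow>
     (\<exists>\<gamma>. S = Wset \<gamma> \<and> A \<subseteq> Wset \<gamma> \<and> (\<forall>\<gamma>'. A \<subseteq> Wset \<gamma>' \<longrightarrow> r \<gamma> \<le> r \<gamma>'))"

end

theory Submission
  imports Defs
begin

text \<open>Weak duality: for a pessimistically feasible pair (\<theta>, \<gamma>), every uncertainty trajectory
  W explaining the data under \<theta> lies in the uncertainty set of \<gamma>, so (W, \<theta>, \<gamma>) is
  optimistically feasible with the same cost r \<gamma>. Hence the optimistic optimum is at most the
  pessimistic one, provided some such W exists.\<close>

lemma unique_argmin_le:
  assumes "unique_argmin P c a" and "P b"
  shows "c a \<le> c b"
  using assms by (simp add: unique_argmin_def)

lemma opt_feasible_if_pess_feasible: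
  assumes "pess_feasible f g Xstate Wset Thet Gam U Y \<theta> \<gamma>"
    and "W \<in> Omega f g Xstate U Y \<theta>"
  shows "opt_feasible f g Xstate Wset Thet Gam U Y W \<theta> \<gamma>"
  using assms by (simp add: pess_feasible_def opt_feasible_def)

theorem proposition4:
  fixes f :: "'x \<Rightarrow> 'x \<Rightarrow> 'u \<Rightarrow> 'w::real_vector \<Rightarrow> 'th \<Rightarrow> 'z::zero"
    and g :: "'x \<Rightarrow> 'u \<Rightarrow> 'w \<Rightarrow> 'th \<Rightarrow> 'y"
    and Xstate :: "'x set"
    and Wset :: "'g \<Rightarrow> 'w set"
    and r :: "'g \<Rightarrow> real"
    and Thet :: "'u list \<Rightarrow> 'y list \<Rightarrow> 'th set"
    and Gam :: "'u list \<Rightarrow> 'y list \<Rightarrow> 'g set"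
    and U :: "'u list" and Y :: "'y list"
    and W_opt :: "'w list" and \<theta>_opt :: 'th and \<gamma>_opt :: 'g
    and \<theta>_pess :: 'th and \<gamma>_pess :: 'g
  assumes data: "length Y = length U"
    and admissible: "\<forall>\<theta> \<in> Thet U Y. Omega f g Xstate U Y \<theta> \<noteq> {}"
    and opt: "unique_argmin (\<lambda>(W, \<theta>, \<gamma>). opt_feasible f g Xstate Wset Thet Gam U Y W \<theta> \<gamma>)
                (\<lambda>(W, \<theta>, \<gamma>). r \<gamma>) (W_opt, \<theta>_opt, \<gamma>_opt)"
    and pess: "unique_argmin (\<lambda>(\<theta>, \<gamma>). pess_feasible f g Xstate Wset Thet Gam U Y \<theta> \<gamma>)
                (\<lambda>(\<theta>, \<gamma>). r \<gamma>) (\<theta>_pess, \<gamma>_pess)"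
    and convex: "\<forall>\<gamma>. convex (Wset \<gamma>)"
    and enclosing_mono: "\<forall>A B SA SB. A \<subseteq> B \<longrightarrow> min_enclosing Wset r A SA \<longrightarrow>
                           min_enclosing Wset r B SB \<longrightarrow> SA \<subseteq> SB"
    and r_mono: "\<forall>\<gamma>1 \<gamma>2. Wset \<gamma>1 \<subseteq> Wset \<gamma>2 \<longrightarrow> r \<gamma>1 \<le> r \<gamma>2"
  shows "r \<gamma>_opt \<le> r \<gamma>_pess"
proof -
  have pess_feasible: "pess_feasible f g Xstate Wset Thet Gam U Y \<theta>_pess \<gamma>_pess"
    using pess by (simp add: unique_argmin_def)
  then have "\<theta>_pess \<in> Thet U Y"
    by (simp add: pess_feasible_def)
  with admissible obtain W where "W \<in> Omega f g Xstate U Y \<theta>_pess"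
    by blast
  with pess_feasible have "opt_feasible f g Xstate Wset Thet Gam U Y W \<theta>_pess \<gamma>_pess"
    by (rule opt_feasible_if_pess_feasible)
  from unique_argmin_le [OF opt, of "(W, \<theta>_pess, \<gamma>_pess)"] this
  show ?thesis by simp
qed

end
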